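(* Let $F:\mathbb{R}^N\times\mathbb{R}\times\mathbb{R}^N\times S^N\to\mathbb{R}$ be continuous and uniformly elliptic: there are $0<\lambda\le\Lambda$ with $\lambda\,\mathrm{tr}(Q)\le F(x,t,p,X)-F(x,t,p,X+Q)\le\Lambda\,\mathrm{tr}(Q)$ for all $x,p,t,X$ and all $Q\in S^N$, $Q\ge0$. Let $A$ be a metric space and $b:\mathbb{R}^N\times A\to\mathbb{R}^N$, $c:\mathbb{R}^N\times A\to\mathbb{R}$ continuous, such that for every $R>0$ there is $K_R$ with $\sup_{|x|\le R,\alpha}(|b|+|c|)\le K_R$ and $|b(x,\alpha)-b(y,\alpha)|\le K_R|x-y|$ for $|x|,|y|\le R$; $c\ge0$ and $c$ continuous in $x$ uniformly in $|x|\le R,\alpha$; and for some $R_o>0$, $\sup_\alpha(b(x,\alpha)\cdot x-c(x,\alpha)|x|^2\log|x|)\le\lambda-(N-1)\Lambda$ for $|x|\ge R_o$. Assume $F(x,t,p,0)\ge\inf_{\alpha\in A}\{c(x,\alpha)t-b(x,\alpha)\cdot p\}$ for all $x,t,p$. Let $u\in USC(\mathbb{R}^N)$ be a viscosity subsolution of $F(x,u,Du,D^2u)=0$ in $\mathbb{R}^N$ with $\limsup_{|x|\to\infty}u(x)/\log|x|\le0$. If either $c\equiv0$ or $u\ge0$, then $u$ is constant.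
   Context: $S^N$ is the space of real symmetric $N\times N$ matrices. *)

theory Defs
  imports "HOL-Analysis.Analysis"
begin

definition symmetric_mat :: "real^'n^'n \<Rightarrow> bool" where
  "symmetric_mat X \<longleftrightarrow> transpose X = X"

definition psd_mat :: "real^'n^'n \<Rightarrow> bool" where
  "psd_mat Q \<longleftrightarrow> symmetric_mat Q \<and> (\<forall>v. 0 \<le> v \<bullet> (Q *v v))"

definition usc :: "(real^'n \<Rightarrow> real) \<Rightarrow> bool" where
  "usc u \<longleftrightarrow> (\<forall>x. \<forall>e>0. eventually (\<lambda>y. u y < u x + e) (at x))"

definition C2_fun :: "(real^'n \<Rightarrow> real) \<Rightarrow> (real^'n \<Rightarrow> real^'n) \<Rightarrow> (real^'n \<Rightarrow> real^'n^'n) \<Rightarrow> bool" where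
  "C2_fun phi Dphi D2phi \<longleftrightarrow>
     (\<forall>x. (phi has_derivative (\<lambda>h. Dphi x \<bullet> h)) (at x)) \<and>
     (\<forall>x. (Dphi has_derivative (\<lambda>h. D2phi x *v h)) (at x)) \<and>
     continuous_on UNIV D2phi"

definition viscosity_subsolution ::
  "(real^'n \<Rightarrow> real \<Rightarrow> real^'n \<Rightarrow> real^'n^'n \<Rightarrow> real) \<Rightarrow> (real^'n \<Rightarrow> real) \<Rightarrow> bool" where
  "viscosity_subsolution F u \<longleftrightarrow> usc u \<and>
     (\<forall>phi Dphi D2phi x0. C2_fun phi Dphi D2phi \<longrightarrow>
        (\<exists>r>0. \<forall>y\<in>ball x0 r. u y - phi y \<le> u x0 - phi x0) \<longrightarrow>
        F x0 (u x0) (Dphi x0) (D2phi x0) \<le> 0)"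

end

theory Submission
  imports Defs
begin

text \<open>The argument consists of two barrier comparisons.

  First, \<open>u\<close> attains its maximum. Let \<open>m\<close> be the maximum of \<open>u\<close> on a ball \<open>|x| \<le> R\<close>.
  For \<open>\<delta>, \<epsilon> > 0\<close> the radial function \<open>w = m + \<delta> + \<epsilon> log_barrier(|x|\<^sup>2)\<close>, where
  \<open>log_barrier(s) \<approx> ln s / 2\<close> is smooth up to \<open>s = 0\<close>, lies above \<open>u\<close> outside the ball:
  otherwise, as \<open>u\<close> grows slower than \<open>\<epsilon> ln |x|\<close>, \<open>u - w\<close> has a positive local maximum at
  some \<open>|x\<^sub>0| > R\<close>, and there uniform ellipticity together with the Lyapunov bound on
  \<open>b \<cdot> x - c |x|\<^sup>2 ln |x|\<close> contradicts the subsolution inequality. Letting \<open>\<delta>, \<epsilon> \<rightarrow> 0\<close> gives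
  \<open>u \<le> m\<close> everywhere.

  Second, a strong maximum principle: if \<open>u\<close> attains its maximum \<open>M\<close> but \<open>u(y) < M\<close>, the
  largest ball around \<open>y\<close> on which \<open>u < M\<close> touches \<open>{u = M}\<close>, and Hopf's barrier
  \<open>exp (-k |x - y|\<^sup>2)\<close> with \<open>k\<close> large produces a local maximum at which the subsolution
  inequality fails.\<close>

section \<open>Radial test functions and uniform ellipticity\<close>

definition outer :: "real^'n \<Rightarrow> real^'n \<Rightarrow> real^'n^'n" where
  "outer x y = (\<chi> i j. x$i * y$j)"

lemma outer_mult_vec: "outer x x *v h = (x \<bullet> h) *\<^sub>R x"
  by (simp add: outer_def vec_eq_iff matrix_vector_mult_def inner_vec_def sum_distrib_left algebra_simps)

lemma trace_outer: "trace (outer x x) = x \<bullet> x"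
  by (simp add: trace_def outer_def inner_vec_def)

lemma trace_scaleR: "trace ((a::real) *\<^sub>R (A::real^'n^'n)) = a * trace A"
  by (simp add: trace_def sum_distrib_left)

lemma symmetric_mat_zero: "symmetric_mat (0::real^'n^'n)"
  by (simp add: symmetric_mat_def transpose_def vec_eq_iff)

lemma symmetric_mat_radial: "symmetric_mat ((a::real) *\<^sub>R mat 1 + b *\<^sub>R outer z z)"
  by (simp add: symmetric_mat_def transpose_def outer_def mat_def vec_eq_iff mult.commute)

lemma C2_fun_radial:
  fixes y :: "real^'n" and g g' g'' :: "real \<Rightarrow> real"
  assumes g': "\<And>s. 0 \<le> s \<Longrightarrow> (g has_real_derivative g' s) (at s)"
    and g'': "\<And>s. 0 \<le> s \<Longrightarrow> (g' has_real_derivative g'' s) (at s)"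
    and cont: "continuous_on {0..} g''"
  shows "C2_fun (\<lambda>x. g ((x - y) \<bullet> (x - y))) (\<lambda>x. (2 * g' ((x - y) \<bullet> (x - y))) *\<^sub>R (x - y))
     (\<lambda>x. (2 * g' ((x - y) \<bullet> (x - y))) *\<^sub>R mat 1 + (4 * g'' ((x - y) \<bullet> (x - y))) *\<^sub>R outer (x - y) (x - y))"
proof -
  let ?q = "\<lambda>x. (x - y) \<bullet> (x - y)"
  have q0: "0 \<le> ?q x" for x
    by simp
  have q: "(?q has_derivative (\<lambda>h. 2 * ((x - y) \<bullet> h))) (at x)" for x
    by (auto intro!: derivative_eq_intros simp: inner_commute)
  have g'q: "((\<lambda>x. g' (?q x)) has_derivative (\<lambda>h. g'' (?q x) * (2 * ((x - y) \<bullet> h)))) (at x)" for x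
    using has_derivative_compose[OF q g''[OF q0, unfolded has_field_derivative_def]] by simp
  have D: "((\<lambda>x. g (?q x)) has_derivative (\<lambda>h. (2 * g' (?q x)) *\<^sub>R (x - y) \<bullet> h)) (at x)" for x
    using has_derivative_compose[OF q g'[OF q0, unfolded has_field_derivative_def]]
    by (rule has_derivative_eq_rhs) (auto simp: fun_eq_iff algebra_simps)
  have D2: "((\<lambda>x. (2 * g' (?q x)) *\<^sub>R (x - y)) has_derivative
      (\<lambda>h. ((2 * g' (?q x)) *\<^sub>R mat 1 + (4 * g'' (?q x)) *\<^sub>R outer (x - y) (x - y)) *v h)) (at x)" for x
  proof -
    have "((\<lambda>x. (2 * g' (?q x)) *\<^sub>R (x - y)) has_derivative
      (\<lambda>h. (2 * g' (?q x)) *\<^sub>R h + (2 * (g'' (?q x) * (2 * ((x - y) \<bullet> h)))) *\<^sub>R (x - y))) (at x)"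
      by (auto intro!: derivative_eq_intros g'q)
    then show ?thesis
      by (rule has_derivative_eq_rhs)
        (simp add: fun_eq_iff matrix_vector_mult_add_rdistrib outer_mult_vec flip: scaleR_matrix_vector_assoc)
  qed
  have "continuous_on {0..} g'"
    using g'' by (meson DERIV_isCont atLeast_iff continuous_at_imp_continuous_on)
  moreover have "continuous_on UNIV ?q" "?q ` UNIV \<subseteq> {0..}"
    using q0 by (auto intro!: continuous_intros)
  ultimately have "continuous_on UNIV (\<lambda>x. g' (?q x))" "continuous_on UNIV (\<lambda>x. g'' (?q x))"
    using continuous_on_compose2 cont by blast+
  then have "continuous_on UNIV (\<lambda>x. (2 * g' (?q x)) *\<^sub>R (mat 1::real^'n^'n) + (4 * g'' (?q x)) *\<^sub>R outer (x - y) (x - y))"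
    unfolding outer_def by (intro continuous_intros)
  with D D2 show ?thesis
    unfolding C2_fun_def by blast
qed

definition uniformly_elliptic ::
  "real \<Rightarrow> real \<Rightarrow> (real^'n \<Rightarrow> real \<Rightarrow> real^'n \<Rightarrow> real^'n^'n \<Rightarrow> real) \<Rightarrow> bool" where
  "uniformly_elliptic lam Lam F \<longleftrightarrow> (\<forall>x t p X Q. symmetric_mat X \<longrightarrow> psd_mat Q \<longrightarrow>
     lam * trace Q \<le> F x t p X - F x t p (X + Q) \<and> F x t p X - F x t p (X + Q) \<le> Lam * trace Q)"

lemma ellipticity_lower_bound:
  fixes F :: "real^'n \<Rightarrow> real \<Rightarrow> real^'n \<Rightarrow> real^'n^'n \<Rightarrow> real"
  assumes ellip: "uniformly_elliptic lam Lam F"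
    and "symmetric_mat X" "psd_mat P" "psd_mat M" "X = P - M"
  shows "F x t p 0 - Lam * trace P + lam * trace M \<le> F x t p X"
proof -
  have "lam * trace M \<le> F x t p X - F x t p (X + M)" "F x t p 0 - F x t p (0 + P) \<le> Lam * trace P"
    using ellip \<open>symmetric_mat X\<close> \<open>psd_mat M\<close> symmetric_mat_zero \<open>psd_mat P\<close>
    unfolding uniformly_elliptic_def by blast+
  with \<open>X = P - M\<close> show ?thesis
    by simp
qed

text \<open>Split the radial matrix into its part \<open>a (I - z z\<^sup>T / |z|\<^sup>2) \<ge> 0\<close> on the
  orthogonal complement of \<open>z\<close> and its part \<open>-(a + b |z|\<^sup>2) z z\<^sup>T / |z|\<^sup>2 \<ge> 0\<close> along \<open>z\<close>.\<close>
lemma ellipticity_radial_lower_bound: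
  fixes F :: "real^'n \<Rightarrow> real \<Rightarrow> real^'n \<Rightarrow> real^'n^'n \<Rightarrow> real"
  assumes ellip: "uniformly_elliptic lam Lam F"
    and z: "z \<noteq> 0" and a: "0 \<le> a" and ab: "a + b * (z \<bullet> z) \<le> 0"
  shows "F x t p 0 - Lam * a * (real CARD('n) - 1) - lam * (a + b * (z \<bullet> z))
           \<le> F x t p (a *\<^sub>R mat 1 + b *\<^sub>R outer z z)"
proof -
  define s where "s = z \<bullet> z"
  have s: "0 < s" using z unfolding s_def by simp
  define P where "P = a *\<^sub>R (mat 1 - (1/s) *\<^sub>R outer z z)"
  define M where "M = (- (a + b * s) / s) *\<^sub>R outer z z"
  have "0 \<le> v \<bullet> (P *v v)" for v
  proof -
    have "v \<bullet> (P *v v) = a * (v \<bullet> v - (z \<bullet> v)\<^sup>2 / s)"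
      unfolding P_def
      by (simp add: outer_mult_vec matrix_vector_mult_diff_rdistrib inner_diff_right power2_eq_square
          inner_commute flip: scaleR_matrix_vector_assoc)
    moreover have "(z \<bullet> v)\<^sup>2 / s \<le> v \<bullet> v"
      using Cauchy_Schwarz_ineq[of z v] s unfolding s_def by (simp add: field_simps)
    ultimately show ?thesis
      using a by simp
  qed
  moreover have "symmetric_mat P"
    unfolding P_def by (simp add: symmetric_mat_def transpose_def outer_def mat_def vec_eq_iff mult.commute)
  ultimately have "psd_mat P"
    unfolding psd_mat_def by blast
  have "0 \<le> v \<bullet> (M *v v)" for v
  proof -
    have "v \<bullet> (M *v v) = (- (a + b * s) / s) * (z \<bullet> v)\<^sup>2"
      unfolding M_def by (simp add: outer_mult_vec power2_eq_square inner_commute flip: scaleR_matrix_vector_assoc)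
    moreover have "0 \<le> - (a + b * s) / s"
      using ab s unfolding s_def by simp
    ultimately show ?thesis
      by (metis mult_nonneg_nonneg zero_le_power2)
  qed
  moreover have "symmetric_mat M"
    unfolding M_def by (simp add: symmetric_mat_def transpose_def outer_def vec_eq_iff mult.commute)
  ultimately have "psd_mat M"
    unfolding psd_mat_def by blast
  have "a *\<^sub>R mat 1 + b *\<^sub>R outer z z = P - M"
    unfolding P_def M_def using s by (simp add: vec_eq_iff outer_def mat_def field_simps)
  from ellipticity_lower_bound[OF ellip symmetric_mat_radial \<open>psd_mat P\<close> \<open>psd_mat M\<close> this, of x t p]
  moreover have "trace P = a * (real CARD('n) - 1)" "trace M = - (a + b * s)"
    unfolding P_def M_def using s by (simp_all add: trace_scaleR trace_sub trace_I trace_outer s_def)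
  ultimately show ?thesis
    unfolding s_def by (simp add: algebra_simps)
qed

section \<open>Upper semicontinuous functions\<close>

lemma usc_open_sublevel:
  assumes "usc u"
  shows "open {x. u x < a}"
proof (subst open_subopen, intro ballI)
  fix x assume "x \<in> {x. u x < a}"
  with assms have "eventually (\<lambda>y. u y < u x + (a - u x)) (at x)"
    unfolding usc_def by (metis diff_gt_0_iff_gt mem_Collect_eq)
  then obtain S where "open S" "x \<in> S" "\<forall>y\<in>S. y \<noteq> x \<longrightarrow> u y < a"
    unfolding eventually_at_topological by auto
  with \<open>x \<in> {x. u x < a}\<close> show "\<exists>T. open T \<and> x \<in> T \<and> T \<subseteq> {x. u x < a}"
    by (intro exI[of _ S]) auto
qed

lemma usc_add_continuous:
  assumes "usc u" "continuous_on UNIV h"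
  shows "usc (\<lambda>x. u x + h x)"
  unfolding usc_def
proof (intro allI impI)
  fix x and e :: real assume "0 < e"
  with assms(1) have "eventually (\<lambda>y. u y < u x + e/2) (at x)"
    unfolding usc_def by simp
  moreover have "isCont h x"
    using assms(2) by (simp add: continuous_on_eq_continuous_at)
  with \<open>0 < e\<close> have "eventually (\<lambda>y. dist (h y) (h x) < e/2) (at x)"
    by (intro tendstoD) (auto simp: isCont_def)
  ultimately show "eventually (\<lambda>y. u y + h y < u x + h x + e) (at x)"
    by eventually_elim (unfold dist_real_def abs_less_iff, linarith)
qed

text \<open>If the supremum were not attained, the sublevel sets \<open>{f < a}\<close> with \<open>a\<close> below it
  would cover \<open>K\<close> without a finite subcover.\<close>
lemma open_sublevel_attains_sup:
  fixes f :: "'a::topological_space \<Rightarrow> real"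
  assumes sub: "\<And>a. open {x. f x < a}" and K: "compact K" "K \<noteq> {}"
  shows "\<exists>x\<in>K. \<forall>y\<in>K. f y \<le> f x"
proof -
  have cover_bound: "\<exists>a\<in>A. \<forall>y\<in>K. f y < a" if cover: "K \<subseteq> (\<Union>a\<in>A. {x. f x < a})" for A
  proof -
    obtain D where D: "D \<subseteq> A" "finite D" "K \<subseteq> (\<Union>a\<in>D. {x. f x < a})"
      by (rule compactE_image[OF K(1), of A "\<lambda>a. {x. f x < a}"]) (use sub cover in auto)
    with K(2) have "D \<noteq> {}" by auto
    have "f y < Max D" if "y \<in> K" for y
    proof -
      from that D(3) obtain a where "a \<in> D" "f y < a" by blast
      with D(2) show ?thesis by (meson Max_ge less_le_trans)
    qed
    with D \<open>D \<noteq> {}\<close> show ?thesis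
      by (metis Max_in subsetD)
  qed
  have "K \<subseteq> (\<Union>a. {x. f x < a})"
    using gt_ex by blast
  then obtain b where "\<forall>y\<in>K. f y < b"
    using cover_bound by blast
  then have "bdd_above (f ` K)"
    by (meson bdd_aboveI2 less_imp_le)
  show ?thesis
  proof (rule ccontr)
    assume "\<not> ?thesis"
    with \<open>bdd_above (f ` K)\<close> have "\<forall>y\<in>K. f y < Sup (f ` K)"
      by (metis cSUP_upper le_less not_le)
    then have "K \<subseteq> (\<Union>a\<in>{..<Sup (f ` K)}. {x. f x < a})"
      by (blast dest: dense)
    then obtain a where "a < Sup (f ` K)" "\<forall>y\<in>K. f y < a"
      using cover_bound by blast
    with K(2) have "Sup (f ` K) \<le> a"
      by (meson cSUP_least less_imp_le)
    with \<open>a < Sup (f ` K)\<close> show False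
      by simp
  qed
qed

lemma usc_annulus_local_max:
  fixes \<psi> :: "real^'n \<Rightarrow> real"
  assumes usc: "usc \<psi>" and x: "R1 \<le> dist y x" "dist y x \<le> R2"
    and inner: "\<And>w. dist y w = R1 \<Longrightarrow> \<psi> w < \<psi> x"
    and outer: "\<And>w. R2 \<le> dist y w \<Longrightarrow> \<psi> w \<le> \<psi> x"
  obtains x0 where "R1 < dist y x0" "dist y x0 \<le> R2" "\<psi> x \<le> \<psi> x0"
    "\<exists>r>0. \<forall>w\<in>ball x0 r. \<psi> w \<le> \<psi> x0"
proof -
  let ?A = "cball y R2 - ball y R1"
  have "x \<in> ?A"
    using x by auto
  moreover have "compact ?A"
    by (intro compact_diff) auto
  ultimately obtain x0 where x0: "x0 \<in> ?A" "\<And>w. w \<in> ?A \<Longrightarrow> \<psi> w \<le> \<psi> x0"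
    using open_sublevel_attains_sup[OF usc_open_sublevel[OF usc], of ?A] by blast
  with \<open>x \<in> ?A\<close> have "\<psi> x \<le> \<psi> x0"
    by blast
  with inner have "dist y x0 \<noteq> R1"
    by force
  with x0(1) have x0_dist: "R1 < dist y x0" "dist y x0 \<le> R2"
    by auto
  have exterior: "\<psi> w \<le> \<psi> x0" if "R1 \<le> dist y w" for w
  proof (cases "dist y w \<le> R2")
    case True
    with that x0(2) show ?thesis by auto
  next
    case False
    with outer[of w] \<open>\<psi> x \<le> \<psi> x0\<close> show ?thesis by linarith
  qed
  have "\<forall>w\<in>ball x0 (dist y x0 - R1). \<psi> w \<le> \<psi> x0"
  proof
    fix w assume "w \<in> ball x0 (dist y x0 - R1)"
    with dist_triangle[of y x0 w] have "R1 \<le> dist y w"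
      by (simp add: dist_commute)
    then show "\<psi> w \<le> \<psi> x0"
      by (rule exterior)
  qed
  moreover have "0 < dist y x0 - R1"
    using x0_dist by simp
  ultimately show ?thesis
    using that x0_dist \<open>\<psi> x \<le> \<psi> x0\<close> by blast
qed

lemma real_ge_of_INF_ereal_le:
  assumes "(INF \<alpha>. ereal (f \<alpha>)) \<le> ereal y" and "\<And>\<alpha>. \<beta> \<le> f \<alpha>"
  shows "\<beta> \<le> y"
proof -
  have "ereal \<beta> \<le> (INF \<alpha>. ereal (f \<alpha>))"
    by (rule INF_greatest) (simp add: assms(2))
  with assms(1) show ?thesis
    by (metis ereal_less_eq(3) order_trans)
qed

lemma real_le_of_SUP_ereal_le:
  assumes "(SUP \<alpha>. ereal (f \<alpha>)) \<le> ereal y"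
  shows "f \<alpha> \<le> y"
  using order_trans[OF SUP_upper[OF UNIV_I] assms] by simp

lemma subsolution_radial_test:
  fixes F :: "real^'n \<Rightarrow> real \<Rightarrow> real^'n \<Rightarrow> real^'n^'n \<Rightarrow> real"
    and u :: "real^'n \<Rightarrow> real" and g g' g'' :: "real \<Rightarrow> real"
  assumes ellip: "uniformly_elliptic lam Lam F" and sub: "viscosity_subsolution F u"
    and g': "\<And>s. 0 \<le> s \<Longrightarrow> (g has_real_derivative g' s) (at s)"
    and g'': "\<And>s. 0 \<le> s \<Longrightarrow> (g' has_real_derivative g'' s) (at s)"
    and cont: "continuous_on {0..} g''"
    and max: "\<exists>r>0. \<forall>w\<in>ball x0 r. u w - g ((w - y) \<bullet> (w - y)) \<le> u x0 - g ((x0 - y) \<bullet> (x0 - y))"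
    and x0: "x0 \<noteq> y" and s: "s = (x0 - y) \<bullet> (x0 - y)"
    and mono: "0 \<le> g' s" and concave: "g' s + 2 * s * g'' s \<le> 0"
  shows "F x0 (u x0) ((2 * g' s) *\<^sub>R (x0 - y)) 0
           \<le> 2 * g' s * (Lam * (real CARD('n) - 1) + lam) + 4 * lam * s * g'' s"
proof -
  let ?p = "(2 * g' s) *\<^sub>R (x0 - y)"
  let ?X = "(2 * g' s) *\<^sub>R mat 1 + (4 * g'' s) *\<^sub>R outer (x0 - y) (x0 - y)"
  have "F x0 (u x0) ?p ?X \<le> 0"
    using sub C2_fun_radial[OF g' g'' cont, of y] max unfolding viscosity_subsolution_def s by blast
  moreover have "F x0 (u x0) ?p 0 - Lam * (2 * g' s) * (real CARD('n) - 1)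
      - lam * (2 * g' s + 4 * g'' s * ((x0 - y) \<bullet> (x0 - y))) \<le> F x0 (u x0) ?p ?X"
    using ellipticity_radial_lower_bound[OF ellip, of "x0 - y" "2 * g' s" "4 * g'' s" x0 "u x0" ?p] x0 mono concave
    unfolding s[symmetric] by (simp add: algebra_simps)
  ultimately show ?thesis
    unfolding s by (simp add: algebra_simps)
qed

section \<open>Strong maximum principle\<close>

lemma usc_nearest_superlevel_point:
  fixes u :: "real^'n \<Rightarrow> real"
  assumes usc: "usc u" and "M \<le> u xm" "u y < M"
  obtains x1 where "M \<le> u x1" "0 < dist y x1" "\<And>w. dist y w < dist y x1 \<Longrightarrow> u w < M"
proof -
  have "closed {w. M \<le> u w}"
    using usc_open_sublevel[OF usc, of M] by (simp add: closed_def Compl_eq not_le)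
  moreover have "xm \<in> {w. M \<le> u w}"
    using assms(2) by simp
  ultimately obtain x1 where x1: "M \<le> u x1" "\<And>w. M \<le> u w \<Longrightarrow> dist y x1 \<le> dist y w"
    using distance_attains_inf[of "{w. M \<le> u w}" y] by auto
  moreover have "y \<noteq> x1"
    using x1(1) \<open>u y < M\<close> by auto
  ultimately show ?thesis
    by (intro that) (auto simp: not_le[symmetric])
qed

lemma hopf_barrier_local_max:
  fixes u :: "real^'n \<Rightarrow> real"
  assumes usc: "usc u" and le_M: "\<And>w. u w \<le> M" and x1: "u x1 = M" "0 < dist y x1"
    and below: "\<And>w. dist y w < dist y x1 \<Longrightarrow> u w < M" and "0 < k"
  obtains \<delta> x0 where "0 < \<delta>" "dist y x1 / 2 < dist y x0" "dist y x0 \<le> dist y x1"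
    "\<exists>r>0. \<forall>w\<in>ball x0 r. u w + \<delta> * exp (- k * (dist y w)\<^sup>2) \<le> u x0 + \<delta> * exp (- k * (dist y x0)\<^sup>2)"
proof -
  define \<rho> where "\<rho> = dist y x1"
  obtain xi where xi: "xi \<in> sphere y (\<rho>/2)" "\<And>w. w \<in> sphere y (\<rho>/2) \<Longrightarrow> u w \<le> u xi"
    using open_sublevel_attains_sup[OF usc_open_sublevel[OF usc], of "sphere y (\<rho>/2)"] x1(2)
    unfolding \<rho>_def by auto
  have "u xi < M"
    using xi(1) x1(2) unfolding \<rho>_def mem_sphere by (intro below) linarith
  define \<delta> where "\<delta> = (M - u xi) / 2"
  define \<psi> where "\<psi> w = u w + \<delta> * exp (- k * (dist y w)\<^sup>2)" for w
  have "usc \<psi>"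
    unfolding \<psi>_def by (intro usc_add_continuous usc continuous_intros)
  moreover have "\<psi> w < \<psi> x1" if "dist y w = \<rho>/2" for w
  proof -
    have "u w \<le> u xi" "\<delta> * exp (- k * (dist y w)\<^sup>2) \<le> \<delta>"
      using xi(2)[of w] that \<open>0 < k\<close> \<open>u xi < M\<close> unfolding \<delta>_def by auto
    moreover have "0 < \<delta> * exp (- k * (dist y x1)\<^sup>2)" "u xi + \<delta> < M"
      using \<open>u xi < M\<close> unfolding \<delta>_def by (simp_all add: field_simps)
    ultimately show ?thesis
      using x1(1) unfolding \<psi>_def by linarith
  qed
  moreover have "\<psi> w \<le> \<psi> x1" if "\<rho> \<le> dist y w" for w
  proof -
    have "\<rho>\<^sup>2 \<le> (dist y w)\<^sup>2"
      using that x1(2) unfolding \<rho>_def by (intro power_mono) auto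
    with \<open>0 < k\<close> have "\<delta> * exp (- k * (dist y w)\<^sup>2) \<le> \<delta> * exp (- k * \<rho>\<^sup>2)"
      using \<open>u xi < M\<close> unfolding \<delta>_def by (intro mult_left_mono) auto
    with le_M[of w] x1(1) show ?thesis
      unfolding \<psi>_def \<rho>_def by simp
  qed
  moreover have "\<rho>/2 \<le> dist y x1" "dist y x1 \<le> \<rho>"
    using x1(2) unfolding \<rho>_def by auto
  ultimately obtain x0 where "\<rho>/2 < dist y x0" "dist y x0 \<le> \<rho>" "\<exists>r>0. \<forall>w\<in>ball x0 r. \<psi> w \<le> \<psi> x0"
    using usc_annulus_local_max by metis
  moreover have "0 < \<delta>"
    using \<open>u xi < M\<close> unfolding \<delta>_def by simp
  ultimately show ?thesis
    using that unfolding \<psi>_def \<rho>_def by blast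
qed

lemma ge_of_INF_bounded_drift:
  fixes b :: "'a \<Rightarrow> 'b::real_inner"
  assumes INF_le: "(INF \<alpha>. ereal (c \<alpha> * t - b \<alpha> \<bullet> p)) \<le> ereal y"
    and "\<And>\<alpha>. 0 \<le> c \<alpha> * t" and "\<And>\<alpha>. norm (b \<alpha>) \<le> K"
  shows "- K * norm p \<le> y"
proof (rule real_ge_of_INF_ereal_le[OF INF_le])
  fix \<alpha>
  have "b \<alpha> \<bullet> p \<le> K * norm p"
    using norm_cauchy_schwarz[of "b \<alpha>" p] mult_right_mono[OF assms(3)[of \<alpha>] norm_ge_zero[of p]]
    by linarith
  with assms(2)[of \<alpha>] show "- K * norm p \<le> c \<alpha> * t - b \<alpha> \<bullet> p"
    by simp
qed

lemma subsolution_gaussian_test: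
  fixes F :: "real^'n \<Rightarrow> real \<Rightarrow> real^'n \<Rightarrow> real^'n^'n \<Rightarrow> real" and u :: "real^'n \<Rightarrow> real"
  assumes ellip: "uniformly_elliptic lam Lam F" and sub: "viscosity_subsolution F u"
    and "0 < \<delta>" "0 < k" and "x0 \<noteq> y" and ks: "1 \<le> 2 * k * (dist y x0)\<^sup>2"
    and loc: "\<exists>r>0. \<forall>w\<in>ball x0 r. u w + \<delta> * exp (- k * (dist y w)\<^sup>2) \<le> u x0 + \<delta> * exp (- k * (dist y x0)\<^sup>2)"
  defines "E \<equiv> \<delta> * k * exp (- k * (dist y x0)\<^sup>2)"
  shows "F x0 (u x0) ((2 * E) *\<^sub>R (x0 - y)) 0
           \<le> 2 * E * (Lam * (real CARD('n) - 1) + lam - 2 * lam * k * (dist y x0)\<^sup>2)"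
proof -
  define g where "g s = - \<delta> * exp (- k * s)" for s
  define g' where "g' s = \<delta> * k * exp (- k * s)" for s
  define g'' where "g'' s = - \<delta> * k\<^sup>2 * exp (- k * s)" for s
  have dist_sq: "(dist y w)\<^sup>2 = (w - y) \<bullet> (w - y)" for w
    by (simp add: dist_norm norm_minus_commute power2_norm_eq_inner)
  define s where "s = (x0 - y) \<bullet> (x0 - y)"
  have "(g has_real_derivative g' t) (at t)" "(g' has_real_derivative g'' t) (at t)" for t
    unfolding g_def g'_def g''_def by (auto intro!: derivative_eq_intros simp: algebra_simps power2_eq_square)
  moreover have "continuous_on {0..} g''"
    unfolding g''_def by (intro continuous_intros)
  moreover have "\<exists>r>0. \<forall>w\<in>ball x0 r. u w - g ((w - y) \<bullet> (w - y)) \<le> u x0 - g ((x0 - y) \<bullet> (x0 - y))"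
    using loc unfolding g_def dist_sq by simp
  moreover have "0 < g' s"
    unfolding g'_def using \<open>0 < \<delta>\<close> \<open>0 < k\<close> by simp
  moreover have "g' s + 2 * s * g'' s = g' s * (1 - 2 * k * s)"
    unfolding g'_def g''_def by (simp add: power2_eq_square algebra_simps)
  with ks \<open>0 < g' s\<close> have "g' s + 2 * s * g'' s \<le> 0"
    unfolding s_def dist_sq by (simp add: mult_nonneg_nonpos)
  ultimately have "F x0 (u x0) ((2 * g' s) *\<^sub>R (x0 - y)) 0
      \<le> 2 * g' s * (Lam * (real CARD('n) - 1) + lam) + 4 * lam * s * g'' s"
    by (intro subsolution_radial_test[OF ellip sub, of g g' g'' x0 y s]) (use \<open>x0 \<noteq> y\<close> s_def in auto)
  moreover have "g' s = E" "g'' s = - k * E"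
    unfolding E_def g'_def g''_def s_def dist_sq by (simp_all add: power2_eq_square)
  ultimately show ?thesis
    unfolding s_def dist_sq[symmetric] by (simp add: algebra_simps)
qed

lemma subsolution_max_imp_constant:
  fixes F :: "real^'n \<Rightarrow> real \<Rightarrow> real^'n \<Rightarrow> real^'n^'n \<Rightarrow> real"
    and b :: "real^'n \<Rightarrow> 'a \<Rightarrow> real^'n" and c :: "real^'n \<Rightarrow> 'a \<Rightarrow> real"
    and u :: "real^'n \<Rightarrow> real"
  assumes ellip: "uniformly_elliptic lam Lam F" and lam: "0 < lam" "lam \<le> Lam"
    and b_bounded: "\<And>R. \<exists>K. \<forall>x \<alpha>. norm x \<le> R \<longrightarrow> norm (b x \<alpha>) \<le> K"
    and F_inf: "\<And>x t p. (INF \<alpha>. ereal (c x \<alpha> * t - b x \<alpha> \<bullet> p)) \<le> ereal (F x t p 0)"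
    and sub: "viscosity_subsolution F u" and cu: "\<And>x \<alpha>. 0 \<le> c x \<alpha> * u x"
    and max: "\<And>x. u x \<le> u xm"
  shows "u y = u xm"
proof (rule ccontr)
  assume "u y \<noteq> u xm"
  with max have "u y < u xm"
    using order_le_neq_trans by blast
  have usc: "usc u"
    using sub unfolding viscosity_subsolution_def by simp
  obtain x1 where x1: "u xm \<le> u x1" "0 < dist y x1" "\<And>w. dist y w < dist y x1 \<Longrightarrow> u w < u xm"
    using usc_nearest_superlevel_point[OF usc order_refl \<open>u y < u xm\<close>] by blast
  define \<rho> where "\<rho> = dist y x1"
  define N where "N = real CARD('n)"
  have "0 < \<rho>" "1 \<le> N"
    using x1(2) unfolding \<rho>_def N_def by auto
  obtain K where K: "\<And>x \<alpha>. norm x \<le> norm y + \<rho> \<Longrightarrow> norm (b x \<alpha>) \<le> K"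
    using b_bounded by blast
  with \<open>0 < \<rho>\<close> have "0 \<le> K"
    by (meson norm_ge_zero norm_zero order_trans le_add_same_cancel1 less_imp_le)
  have "Lam * 1 \<le> Lam * N"
    using lam \<open>1 \<le> N\<close> by (intro mult_left_mono) auto
  with lam have "lam \<le> Lam * N"
    by linarith
  with \<open>0 \<le> K\<close> \<open>0 < \<rho>\<close> have pos: "lam \<le> Lam * N + K * \<rho> + 1"
    by (smt (verit) mult_nonneg_nonneg)
  define k where "k = 2 * (Lam * N + K * \<rho> + 1) / (lam * \<rho>\<^sup>2)"
  have "0 < k" and k: "lam * k * \<rho>\<^sup>2 / 2 = Lam * N + K * \<rho> + 1"
    using lam pos \<open>0 < \<rho>\<close> unfolding k_def by (simp_all add: field_simps)
  obtain \<delta> x0 where "0 < \<delta>" and x0: "\<rho> / 2 < dist y x0" "dist y x0 \<le> \<rho>"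
    and loc: "\<exists>r>0. \<forall>w\<in>ball x0 r. u w + \<delta> * exp (- k * (dist y w)\<^sup>2) \<le> u x0 + \<delta> * exp (- k * (dist y x0)\<^sup>2)"
    using hopf_barrier_local_max[OF usc max] x1 \<open>0 < k\<close> unfolding \<rho>_def
    by (metis antisym max)
  define s where "s = (dist y x0)\<^sup>2"
  define E where "E = \<delta> * k * exp (- k * s)"
  have "(\<rho> / 2)\<^sup>2 \<le> s"
    using x0 \<open>0 < \<rho>\<close> unfolding s_def by (intro power_mono) auto
  then have "lam * k * (\<rho> / 2)\<^sup>2 \<le> lam * k * s"
    using lam \<open>0 < k\<close> by (intro mult_left_mono) auto
  moreover have "lam * k * \<rho>\<^sup>2 / 2 = 2 * (lam * k * (\<rho> / 2)\<^sup>2)" "lam * (2 * k * s) = 2 * (lam * k * s)"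
    by (simp_all add: power_divide)
  ultimately have ks: "Lam * N + K * \<rho> + 1 \<le> lam * (2 * k * s)"
    using k by linarith
  with lam pos have "1 \<le> 2 * k * s"
    by (smt (verit) mult_le_cancel_left1)
  moreover have "x0 \<noteq> y"
    using x0 \<open>0 < \<rho>\<close> by auto
  ultimately have test: "F x0 (u x0) ((2 * E) *\<^sub>R (x0 - y)) 0 \<le> 2 * E * (Lam * (N - 1) + lam - 2 * lam * k * s)"
    using subsolution_gaussian_test[OF ellip sub \<open>0 < \<delta>\<close> \<open>0 < k\<close> _ _ loc] unfolding E_def N_def s_def by blast
  have "0 < E"
    unfolding E_def using \<open>0 < \<delta>\<close> \<open>0 < k\<close> by simp
  have "norm x0 \<le> norm y + \<rho>"
    using norm_triangle_ineq[of y "x0 - y"] x0 by (simp add: dist_norm norm_minus_commute)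
  then have "- K * norm ((2 * E) *\<^sub>R (x0 - y)) \<le> F x0 (u x0) ((2 * E) *\<^sub>R (x0 - y)) 0"
    using K by (intro ge_of_INF_bounded_drift[OF F_inf cu])
  moreover have "K * norm ((2 * E) *\<^sub>R (x0 - y)) \<le> 2 * E * (K * \<rho>)"
    using x0 \<open>0 < E\<close> \<open>0 \<le> K\<close> by (simp add: dist_norm norm_minus_commute mult_left_mono)
  ultimately have "2 * E * (lam * (2 * k * s)) \<le> 2 * E * (Lam * (N - 1) + lam + K * \<rho>)"
    using test by (simp add: algebra_simps)
  with \<open>0 < E\<close> have "lam * (2 * k * s) \<le> Lam * (N - 1) + lam + K * \<rho>"
    by simp
  with ks lam show False
    by (simp add: algebra_simps)
qed

section \<open>A logarithmic barrier at infinity\<close>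

definition log_barrier :: "real \<Rightarrow> real" where
  "log_barrier s = ln (1 + s) / 2 - inverse (1 + s)"

definition log_barrier' :: "real \<Rightarrow> real" where
  "log_barrier' s = inverse (1 + s) / 2 + inverse (1 + s) ^ 2"

definition log_barrier'' :: "real \<Rightarrow> real" where
  "log_barrier'' s = - (inverse (1 + s) ^ 2) / 2 - 2 * inverse (1 + s) ^ 3"

lemma
  assumes "0 \<le> s"
  shows has_real_derivative_log_barrier: "(log_barrier has_real_derivative log_barrier' s) (at s)"
    and has_real_derivative_log_barrier': "(log_barrier' has_real_derivative log_barrier'' s) (at s)"
proof -
  have "((\<lambda>s. 1 + s) has_real_derivative 1) (at s)"
    by (auto intro!: derivative_eq_intros)
  with assms have inv: "((\<lambda>s. inverse (1 + s)) has_real_derivative - (inverse (1 + s) ^ 2)) (at s)"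
    using DERIV_inverse_fun[of "\<lambda>s. 1 + s" 1 s] by (simp add: power2_eq_square)
  have "((\<lambda>s. ln (1 + s)) has_real_derivative inverse (1 + s)) (at s)"
    using assms by (auto intro!: derivative_eq_intros simp: inverse_eq_divide)
  from DERIV_diff[OF DERIV_cdivide[OF this, of 2] inv]
  show "(log_barrier has_real_derivative log_barrier' s) (at s)"
    unfolding log_barrier_def[abs_def] log_barrier'_def by simp
  from inv assms show "(log_barrier' has_real_derivative log_barrier'' s) (at s)"
    unfolding log_barrier'_def[abs_def] log_barrier''_def
    by (auto intro!: derivative_eq_intros simp: power2_eq_square power3_eq_cube)
qed

lemma continuous_on_log_barrier'': "continuous_on {0..} log_barrier''"
  unfolding log_barrier''_def[abs_def] by (intro continuous_intros) auto

lemma log_barrier'_pos: "0 \<le> s \<Longrightarrow> 0 < log_barrier' s"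
  unfolding log_barrier'_def by (simp add: add_pos_nonneg)

lemma log_barrier_identities:
  assumes "0 \<le> s"
  shows "(log_barrier' s + 2 * s * log_barrier'' s) * (2 * (1 + s) ^ 3) = 3 - 6 * s - s\<^sup>2"
    and "(log_barrier' s + s * log_barrier'' s) * (2 * (1 + s) ^ 3) = 3 - s"
    and "(2 * s * log_barrier' s - 1) * (1 + s)\<^sup>2 = s - 1"
proof -
  define i where "i = inverse (1 + s)"
  have "(1 + s) * i = 1"
    unfolding i_def using assms by simp
  then show "(log_barrier' s + 2 * s * log_barrier'' s) * (2 * (1 + s) ^ 3) = 3 - 6 * s - s\<^sup>2"
    and "(log_barrier' s + s * log_barrier'' s) * (2 * (1 + s) ^ 3) = 3 - s"
    and "(2 * s * log_barrier' s - 1) * (1 + s)\<^sup>2 = s - 1"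
    unfolding log_barrier'_def log_barrier''_def i_def[symmetric] by algebra+
qed

lemma log_barrier_radial_concave:
  assumes "1 \<le> s"
  shows "log_barrier' s + 2 * s * log_barrier'' s \<le> 0"
proof -
  have "3 - 6 * s - s\<^sup>2 < 0"
    using assms by (simp add: power2_eq_square) (smt (verit) mult_nonneg_nonneg)
  with log_barrier_identities(1)[of s] assms show ?thesis
    by (smt (verit) zero_le_mult_iff zero_less_power)
qed

lemma log_barrier_trace_neg:
  assumes "3 < s"
  shows "log_barrier' s + s * log_barrier'' s < 0"
  using log_barrier_identities(2)[of s] assms by (smt (verit) zero_le_mult_iff zero_less_power)

lemma log_barrier_ge_ln:
  fixes y :: "'a::real_inner"
  assumes "1 \<le> norm y"
  shows "ln (norm y) - 1 \<le> log_barrier (y \<bullet> y)"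
proof -
  have "ln (norm y) = ln (y \<bullet> y) / 2"
    using assms by (simp add: power2_norm_eq_inner[symmetric] ln_realpow)
  also have "\<dots> \<le> ln (1 + y \<bullet> y) / 2"
  proof -
    have "y \<noteq> 0"
      using assms by auto
    then have "0 < y \<bullet> y"
      by simp
    then show ?thesis
      by (intro divide_right_mono ln_mono) auto
  qed
  moreover have "inverse (1 + y \<bullet> y) \<le> 1"
    by (simp add: inverse_le_1_iff)
  ultimately show ?thesis
    unfolding log_barrier_def by linarith
qed

lemma log_barrier'_ln_le:
  assumes "2 \<le> r"
  shows "2 * r\<^sup>2 * log_barrier' (r\<^sup>2) * ln r \<le> ln r + 1"
proof -
  define s where "s = r\<^sup>2"
  have s: "4 \<le> s"
    using assms power_mono[of 2 r 2] unfolding s_def by simp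
  have "2 * s * log_barrier' s - 1 = (s - 1) / (1 + s)\<^sup>2"
    using log_barrier_identities(3)[of s] s by (simp add: field_simps)
  moreover have "(s - 1) * ln r \<le> (1 + s)\<^sup>2"
  proof -
    have "ln r \<le> s"
      using ln_le_minus_one[of r] assms unfolding s_def by (smt (verit) power2_eq_square mult_le_cancel_left1)
    then have "(s - 1) * ln r \<le> s * s"
      using s assms by (intro mult_mono) auto
    also have "\<dots> \<le> (1 + s)\<^sup>2"
      using s by (simp add: power2_eq_square algebra_simps)
    finally show ?thesis .
  qed
  ultimately have "(2 * s * log_barrier' s - 1) * ln r \<le> 1"
    using s by (simp add: divide_le_eq_1)
  then show ?thesis
    unfolding s_def by (simp add: algebra_simps)
qed

lemma Limsup_log_le_0_imp_eventually_less:
  fixes u :: "'a::real_normed_vector \<Rightarrow> real"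
  assumes "Limsup at_infinity (\<lambda>x. ereal (u x / ln (norm x))) \<le> 0" and "0 < e"
  shows "eventually (\<lambda>x. u x < e * ln (norm x)) at_infinity"
proof -
  have "eventually (\<lambda>x. ereal (u x / ln (norm x)) < ereal e) at_infinity"
    using assms by (intro Limsup_lessD) (meson ereal_less(2) order_le_less_trans)
  moreover have "eventually (\<lambda>x. 1 < norm x) at_infinity"
    unfolding eventually_at_infinity by (intro exI[of _ 2]) auto
  ultimately show ?thesis
  proof eventually_elim
    case (elim x)
    then have "0 < ln (norm x)"
      using ln_gt_zero by blast
    with elim show ?case
      by (simp add: pos_divide_less_eq mult.commute)
  qed
qed

lemma eventually_below_log_barrier:
  fixes u :: "'a::real_inner \<Rightarrow> real"
  assumes growth: "\<And>e. 0 < e \<Longrightarrow> eventually (\<lambda>x. u x < e * ln (norm x)) at_infinity"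
    and "0 < \<epsilon>"
  shows "eventually (\<lambda>y. u y < C + \<epsilon> * log_barrier (y \<bullet> y)) at_infinity"
proof -
  have "filterlim (\<lambda>y::'a. ln (norm y)) at_top at_infinity"
    by (intro filterlim_compose[OF ln_at_top] filterlim_at_infinity_imp_norm_at_top filterlim_ident)
  then have "eventually (\<lambda>y::'a. 2 * \<bar>C - \<epsilon>\<bar> / \<epsilon> < ln (norm y)) at_infinity"
    by (simp add: filterlim_at_top_dense)
  moreover have "eventually (\<lambda>y::'a. 1 \<le> norm y) at_infinity"
    by (simp add: eventually_at_infinity) blast
  moreover have "eventually (\<lambda>y. u y < \<epsilon> / 2 * ln (norm y)) at_infinity"
    using \<open>0 < \<epsilon>\<close> by (intro growth) simp
  ultimately show ?thesis
  proof eventually_elim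
    case (elim y)
    then have "\<epsilon> * (ln (norm y) - 1) \<le> \<epsilon> * log_barrier (y \<bullet> y)"
      using log_barrier_ge_ln[of y] \<open>0 < \<epsilon>\<close> by (intro mult_left_mono) auto
    moreover have "2 * \<bar>C - \<epsilon>\<bar> < \<epsilon> * ln (norm y)" "2 * u y < \<epsilon> * ln (norm y)"
      using elim(1,3) \<open>0 < \<epsilon>\<close> by (simp_all add: field_simps)
    ultimately show ?case
      using abs_ge_minus_self[of "C - \<epsilon>"] by (simp add: algebra_simps)
  qed
qed

lemma log_barrier_local_max:
  fixes u :: "real^'n \<Rightarrow> real"
  assumes usc: "usc u"
    and growth: "\<And>e. 0 < e \<Longrightarrow> eventually (\<lambda>x. u x < e * ln (norm x)) at_infinity"
    and sphere: "\<And>y. norm y = R \<Longrightarrow> u y \<le> m" and "0 < \<delta>" "0 < \<epsilon>"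
    and w: "w = (\<lambda>y. m + \<delta> + \<epsilon> * (log_barrier (y \<bullet> y) - log_barrier (R\<^sup>2)))"
    and x: "R \<le> norm x" "w x < u x"
  obtains x0 where "R < norm x0" "w x0 < u x0" "\<exists>r>0. \<forall>y\<in>ball x0 r. u y - w y \<le> u x0 - w x0"
proof -
  have "eventually (\<lambda>y. u y < (m + \<delta> - \<epsilon> * log_barrier (R\<^sup>2)) + \<epsilon> * log_barrier (y \<bullet> y)) at_infinity"
    using eventually_below_log_barrier[OF growth \<open>0 < \<epsilon>\<close>] .
  then have "eventually (\<lambda>y. u y - w y < 0) at_infinity"
    unfolding w by (simp add: algebra_simps)
  then obtain B where B: "\<And>y. B \<le> norm y \<Longrightarrow> u y - w y < 0"
    unfolding eventually_at_infinity by blast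
  have "continuous_on UNIV (\<lambda>y. - w y)"
    unfolding w log_barrier_def by (intro continuous_intros) (auto simp: add_nonneg_eq_0_iff)
  from usc_add_continuous[OF usc this] have usc_diff: "usc (\<lambda>y. u y - w y)"
    by simp
  have x_dist: "R \<le> dist 0 x" "dist 0 x \<le> max B (norm x)"
    using x(1) by auto
  have inner: "u y - w y < u x - w x" if "dist 0 y = R" for y
  proof -
    have "y \<bullet> y = R\<^sup>2"
      using that by (simp add: power2_norm_eq_inner[symmetric])
    with sphere[of y] that x(2) \<open>0 < \<delta>\<close> show ?thesis
      unfolding w by simp
  qed
  have outer: "u y - w y \<le> u x - w x" if "max B (norm x) \<le> dist 0 y" for y
    using B[of y] that x(2) by simp
  obtain x0 where "R < dist 0 x0" "dist 0 x0 \<le> max B (norm x)" "u x - w x \<le> u x0 - w x0"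
      "\<exists>r>0. \<forall>y\<in>ball x0 r. u y - w y \<le> u x0 - w x0"
    by (rule usc_annulus_local_max[OF usc_diff x_dist inner outer])
  with x(2) show ?thesis
    by (intro that[of x0]) auto
qed

lemma log_barrier_comparison_ge_ln:
  fixes y :: "'a::real_inner"
  assumes "1 \<le> norm y" "0 \<le> m" "0 \<le> \<epsilon>" "\<epsilon> * (ln (1 + R\<^sup>2) / 2 + 2) \<le> \<delta>"
  shows "\<epsilon> * (ln (norm y) + 1) \<le> m + \<delta> + \<epsilon> * (log_barrier (y \<bullet> y) - log_barrier (R\<^sup>2))"
proof -
  have "\<epsilon> * (ln (norm y) - 1) \<le> \<epsilon> * log_barrier (y \<bullet> y)"
    using log_barrier_ge_ln[OF assms(1)] assms(3) by (rule mult_left_mono)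
  moreover have "\<epsilon> * log_barrier (R\<^sup>2) \<le> \<epsilon> * (ln (1 + R\<^sup>2) / 2)"
    using assms(3) unfolding log_barrier_def by (intro mult_left_mono) auto
  ultimately show ?thesis
    using assms(2,4) by (simp add: algebra_simps)
qed

lemma subsolution_log_barrier_test:
  fixes F :: "real^'n \<Rightarrow> real \<Rightarrow> real^'n \<Rightarrow> real^'n^'n \<Rightarrow> real" and u :: "real^'n \<Rightarrow> real"
  assumes ellip: "uniformly_elliptic lam Lam F" and sub: "viscosity_subsolution F u"
    and "0 < \<epsilon>" "2 \<le> norm x0"
    and loc: "\<exists>r>0. \<forall>y\<in>ball x0 r. u y - \<epsilon> * log_barrier (y \<bullet> y) \<le> u x0 - \<epsilon> * log_barrier (x0 \<bullet> x0)"
  defines "s \<equiv> x0 \<bullet> x0"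
  shows "F x0 (u x0) ((2 * \<epsilon> * log_barrier' s) *\<^sub>R x0) 0
           \<le> 2 * \<epsilon> * log_barrier' s * (Lam * (real CARD('n) - 1) + lam) + 4 * lam * s * \<epsilon> * log_barrier'' s"
proof -
  have "4 \<le> s"
    using \<open>2 \<le> norm x0\<close> power_mono[of 2 "norm x0" 2] unfolding s_def power2_norm_eq_inner by simp
  have "\<epsilon> * (log_barrier' s + 2 * s * log_barrier'' s) \<le> 0"
    using log_barrier_radial_concave[of s] \<open>4 \<le> s\<close> \<open>0 < \<epsilon>\<close> by (intro mult_nonneg_nonpos) auto
  then have concave: "\<epsilon> * log_barrier' s + 2 * s * (\<epsilon> * log_barrier'' s) \<le> 0"
    by (simp add: algebra_simps)
  have derivs: "((\<lambda>s. \<epsilon> * log_barrier s) has_real_derivative \<epsilon> * log_barrier' t) (at t)"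
    "((\<lambda>s. \<epsilon> * log_barrier' s) has_real_derivative \<epsilon> * log_barrier'' t) (at t)" if "0 \<le> t" for t
    using DERIV_cmult[OF has_real_derivative_log_barrier[OF that]]
      DERIV_cmult[OF has_real_derivative_log_barrier'[OF that]] by simp_all
  have "F x0 (u x0) ((2 * (\<epsilon> * log_barrier' s)) *\<^sub>R (x0 - 0)) 0
      \<le> 2 * (\<epsilon> * log_barrier' s) * (Lam * (real CARD('n) - 1) + lam) + 4 * lam * s * (\<epsilon> * log_barrier'' s)"
  proof (rule subsolution_radial_test[OF ellip sub, of "\<lambda>s. \<epsilon> * log_barrier s" "\<lambda>s. \<epsilon> * log_barrier' s"
        "\<lambda>s. \<epsilon> * log_barrier'' s" x0 0 s])
    show "continuous_on {0..} (\<lambda>s. \<epsilon> * log_barrier'' s)"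
      by (intro continuous_intros continuous_on_log_barrier'')
    show "\<exists>r>0. \<forall>w\<in>ball x0 r. u w - \<epsilon> * log_barrier ((w - 0) \<bullet> (w - 0))
        \<le> u x0 - \<epsilon> * log_barrier ((x0 - 0) \<bullet> (x0 - 0))"
      using loc by simp
    show "x0 \<noteq> 0" "s = (x0 - 0) \<bullet> (x0 - 0)" "0 \<le> \<epsilon> * log_barrier' s"
      using \<open>2 \<le> norm x0\<close> \<open>0 < \<epsilon>\<close> log_barrier'_pos[of s] \<open>4 \<le> s\<close> unfolding s_def by auto
  qed (use derivs concave in auto)
  then show ?thesis
    by (simp add: mult.assoc)
qed

lemma log_barrier_touching_impossible:
  fixes F :: "real^'n \<Rightarrow> real \<Rightarrow> real^'n \<Rightarrow> real^'n^'n \<Rightarrow> real"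
    and b :: "real^'n \<Rightarrow> 'a \<Rightarrow> real^'n" and c :: "real^'n \<Rightarrow> 'a \<Rightarrow> real"
    and u :: "real^'n \<Rightarrow> real"
  assumes ellip: "uniformly_elliptic lam Lam F" and "0 < lam"
    and lyap: "\<And>x \<alpha>. R \<le> norm x \<Longrightarrow>
        b x \<alpha> \<bullet> x - c x \<alpha> * (norm x)\<^sup>2 * ln (norm x) \<le> lam - (real CARD('n) - 1) * Lam"
    and F_inf: "\<And>x t p. (INF \<alpha>. ereal (c x \<alpha> * t - b x \<alpha> \<bullet> p)) \<le> ereal (F x t p 0)"
    and sub: "viscosity_subsolution F u"
    and c_nonneg: "\<And>x \<alpha>. 0 \<le> c x \<alpha>" and alt: "(\<forall>x \<alpha>. c x \<alpha> = 0) \<or> 0 \<le> m"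
    and "2 \<le> R" "0 < \<epsilon>" "\<epsilon> * (ln (1 + R\<^sup>2) / 2 + 2) \<le> \<delta>"
    and w: "w = (\<lambda>y. m + \<delta> + \<epsilon> * (log_barrier (y \<bullet> y) - log_barrier (R\<^sup>2)))"
    and x0: "R < norm x0" "w x0 < u x0"
    and loc: "\<exists>r>0. \<forall>y\<in>ball x0 r. u y - w y \<le> u x0 - w x0"
  shows False
proof -
  define s where "s = x0 \<bullet> x0"
  have s_norm: "s = (norm x0)\<^sup>2"
    unfolding s_def by (rule power2_norm_eq_inner[symmetric])
  have "4 \<le> s"
    using x0(1) \<open>2 \<le> R\<close> power_mono[of 2 "norm x0" 2] unfolding s_norm by simp
  define a where "a = 2 * \<epsilon> * log_barrier' s"
  have "0 < a"
    unfolding a_def using \<open>0 < \<epsilon>\<close> log_barrier'_pos[of s] \<open>4 \<le> s\<close> by simp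
  have "\<exists>r>0. \<forall>y\<in>ball x0 r. u y - \<epsilon> * log_barrier (y \<bullet> y) \<le> u x0 - \<epsilon> * log_barrier (x0 \<bullet> x0)"
    using loc unfolding w by (simp add: algebra_simps)
  with x0(1) \<open>2 \<le> R\<close> have test: "F x0 (u x0) (a *\<^sub>R x0) 0
      \<le> a * (Lam * (real CARD('n) - 1) + lam) + 4 * lam * s * \<epsilon> * log_barrier'' s"
    unfolding a_def s_def by (intro subsolution_log_barrier_test[OF ellip sub \<open>0 < \<epsilon>\<close>]) auto
  \<comment> \<open>Since \<open>u\<close> lies above the barrier at \<open>x0\<close>, the term \<open>c u\<close> absorbs the
    \<open>c |x|\<^sup>2 ln |x|\<close> part of the Lyapunov bound.\<close>
  have drift: "a * (c x0 \<alpha> * s * ln (norm x0)) \<le> c x0 \<alpha> * u x0" for \<alpha>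
  proof (cases "c x0 \<alpha> = 0")
    case False
    with alt have "0 \<le> m"
      by blast
    have "\<epsilon> * (2 * (norm x0)\<^sup>2 * log_barrier' ((norm x0)\<^sup>2) * ln (norm x0)) \<le> \<epsilon> * (ln (norm x0) + 1)"
      using log_barrier'_ln_le[of "norm x0"] x0(1) \<open>2 \<le> R\<close> \<open>0 < \<epsilon>\<close> by (intro mult_left_mono) auto
    then have "a * s * ln (norm x0) \<le> \<epsilon> * (ln (norm x0) + 1)"
      unfolding a_def s_norm by (simp add: algebra_simps)
    also have "\<dots> \<le> w x0"
      using log_barrier_comparison_ge_ln[of x0 m \<epsilon> R \<delta>] x0(1) \<open>2 \<le> R\<close> \<open>0 \<le> m\<close> \<open>0 < \<epsilon>\<close>
        \<open>\<epsilon> * _ \<le> \<delta>\<close> unfolding w by simp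
    finally have "a * s * ln (norm x0) \<le> u x0"
      using x0(2) by linarith
    then have "c x0 \<alpha> * (a * s * ln (norm x0)) \<le> c x0 \<alpha> * u x0"
      using c_nonneg[of x0 \<alpha>] by (rule mult_left_mono)
    then show ?thesis
      by (simp add: algebra_simps)
  qed simp
  have "- a * (lam - (real CARD('n) - 1) * Lam) \<le> F x0 (u x0) (a *\<^sub>R x0) 0"
  proof (rule real_ge_of_INF_ereal_le[OF F_inf])
    fix \<alpha>
    have "a * (b x0 \<alpha> \<bullet> x0) \<le> a * (lam - (real CARD('n) - 1) * Lam + c x0 \<alpha> * s * ln (norm x0))"
      using lyap[of x0 \<alpha>] x0(1) \<open>0 < a\<close> unfolding s_norm by (intro mult_left_mono) auto
    with drift[of \<alpha>] show "- a * (lam - (real CARD('n) - 1) * Lam) \<le> c x0 \<alpha> * u x0 - b x0 \<alpha> \<bullet> (a *\<^sub>R x0)"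
      by (simp add: algebra_simps)
  qed
  with test have "0 \<le> lam * (4 * \<epsilon> * (log_barrier' s + s * log_barrier'' s))"
    unfolding a_def by (simp add: algebra_simps)
  moreover have "lam * (4 * \<epsilon> * (log_barrier' s + s * log_barrier'' s)) < 0"
    using log_barrier_trace_neg[of s] \<open>4 \<le> s\<close> \<open>0 < lam\<close> \<open>0 < \<epsilon>\<close> by (simp add: mult_pos_neg)
  ultimately show False
    by simp
qed

lemma subsolution_le_log_barrier:
  fixes F :: "real^'n \<Rightarrow> real \<Rightarrow> real^'n \<Rightarrow> real^'n^'n \<Rightarrow> real"
    and b :: "real^'n \<Rightarrow> 'a \<Rightarrow> real^'n" and c :: "real^'n \<Rightarrow> 'a \<Rightarrow> real"
    and u :: "real^'n \<Rightarrow> real"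
  assumes ellip: "uniformly_elliptic lam Lam F" and "0 < lam"
    and lyap: "\<And>x \<alpha>. R \<le> norm x \<Longrightarrow>
        b x \<alpha> \<bullet> x - c x \<alpha> * (norm x)\<^sup>2 * ln (norm x) \<le> lam - (real CARD('n) - 1) * Lam"
    and F_inf: "\<And>x t p. (INF \<alpha>. ereal (c x \<alpha> * t - b x \<alpha> \<bullet> p)) \<le> ereal (F x t p 0)"
    and sub: "viscosity_subsolution F u"
    and growth: "\<And>e. 0 < e \<Longrightarrow> eventually (\<lambda>x. u x < e * ln (norm x)) at_infinity"
    and c_nonneg: "\<And>x \<alpha>. 0 \<le> c x \<alpha>" and alt: "(\<forall>x \<alpha>. c x \<alpha> = 0) \<or> 0 \<le> m"
    and sphere: "\<And>y. norm y = R \<Longrightarrow> u y \<le> m"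
    and "2 \<le> R" "0 < \<delta>" "0 < \<epsilon>" and \<delta>: "\<epsilon> * (ln (1 + R\<^sup>2) / 2 + 2) \<le> \<delta>"
    and x: "R \<le> norm x"
  shows "u x \<le> m + \<delta> + \<epsilon> * (log_barrier (x \<bullet> x) - log_barrier (R\<^sup>2))"
proof (rule ccontr)
  define w where "w = (\<lambda>y::real^'n. m + \<delta> + \<epsilon> * (log_barrier (y \<bullet> y) - log_barrier (R\<^sup>2)))"
  assume "\<not> ?thesis"
  then have "w x < u x"
    unfolding w_def by simp
  have usc: "usc u"
    using sub unfolding viscosity_subsolution_def by simp
  obtain x0 where "R < norm x0" "w x0 < u x0" "\<exists>r>0. \<forall>y\<in>ball x0 r. u y - w y \<le> u x0 - w x0"
    using log_barrier_local_max[OF usc growth sphere \<open>0 < \<delta>\<close> \<open>0 < \<epsilon>\<close> w_def x \<open>w x < u x\<close>] by blast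
  then show False
    using log_barrier_touching_impossible[OF ellip \<open>0 < lam\<close> lyap F_inf sub c_nonneg alt
        \<open>2 \<le> R\<close> \<open>0 < \<epsilon>\<close> \<delta> w_def] by blast
qed

lemma subsolution_attains_max:
  fixes F :: "real^'n \<Rightarrow> real \<Rightarrow> real^'n \<Rightarrow> real^'n^'n \<Rightarrow> real"
    and b :: "real^'n \<Rightarrow> 'a \<Rightarrow> real^'n" and c :: "real^'n \<Rightarrow> 'a \<Rightarrow> real"
    and u :: "real^'n \<Rightarrow> real"
  assumes ellip: "uniformly_elliptic lam Lam F" and "0 < lam"
    and lyap: "\<And>x \<alpha>. Ro \<le> norm x \<Longrightarrow>
        b x \<alpha> \<bullet> x - c x \<alpha> * (norm x)\<^sup>2 * ln (norm x) \<le> lam - (real CARD('n) - 1) * Lam"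
    and F_inf: "\<And>x t p. (INF \<alpha>. ereal (c x \<alpha> * t - b x \<alpha> \<bullet> p)) \<le> ereal (F x t p 0)"
    and sub: "viscosity_subsolution F u"
    and growth: "\<And>e. 0 < e \<Longrightarrow> eventually (\<lambda>x. u x < e * ln (norm x)) at_infinity"
    and c_nonneg: "\<And>x \<alpha>. 0 \<le> c x \<alpha>" and alt: "(\<forall>x \<alpha>. c x \<alpha> = 0) \<or> (\<forall>x. 0 \<le> u x)"
  shows "\<exists>xm. \<forall>x. u x \<le> u xm"
proof -
  have usc: "usc u"
    using sub unfolding viscosity_subsolution_def by simp
  define R where "R = max Ro 2"
  have "cball (0::real^'n) R \<noteq> {}"
    unfolding R_def by simp
  then obtain xm where "\<forall>y\<in>cball 0 R. u y \<le> u xm"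
    using open_sublevel_attains_sup[OF usc_open_sublevel[OF usc] compact_cball] by blast
  then have xm: "\<And>y. norm y \<le> R \<Longrightarrow> u y \<le> u xm"
    by simp
  have "u x \<le> u xm" if "R \<le> norm x" for x
  proof (rule field_le_epsilon)
    fix e :: real assume "0 < e"
    define Q where "Q = ln (1 + R\<^sup>2) / 2 + 2"
    define D where "D = log_barrier (x \<bullet> x) - log_barrier (R\<^sup>2)"
    define \<epsilon> where "\<epsilon> = e / (2 * (Q + \<bar>D\<bar>))"
    have "0 < Q"
      unfolding Q_def by (simp add: add_nonneg_pos)
    with \<open>0 < e\<close> have "0 < \<epsilon>" and "\<epsilon> * (Q + \<bar>D\<bar>) = e / 2"
      unfolding \<epsilon>_def by (simp_all add: field_simps)
    moreover have "\<epsilon> * Q \<le> \<epsilon> * (Q + \<bar>D\<bar>)" "\<epsilon> * D \<le> \<epsilon> * (Q + \<bar>D\<bar>)"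
      using \<open>0 < \<epsilon>\<close> \<open>0 < Q\<close> abs_ge_self[of D] by (intro mult_left_mono; linarith)+
    ultimately have "\<epsilon> * Q \<le> e / 2" "\<epsilon> * D \<le> e / 2"
      by linarith+
    moreover have "u x \<le> u xm + e / 2 + \<epsilon> * D"
      unfolding D_def
    proof (rule subsolution_le_log_barrier[OF ellip \<open>0 < lam\<close> _ F_inf sub growth c_nonneg])
      show "(\<forall>x \<alpha>. c x \<alpha> = 0) \<or> 0 \<le> u xm"
        using alt by blast
    qed (use lyap xm that \<open>0 < e\<close> \<open>0 < \<epsilon>\<close> \<open>\<epsilon> * Q \<le> e / 2\<close> in \<open>auto simp: R_def Q_def\<close>)
    ultimately show "u x \<le> u xm + e"
      by linarith
  qed
  with xm show ?thesis
    by (meson linear)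
qed

theorem corollary3p1:
  fixes F :: "real^'n \<Rightarrow> real \<Rightarrow> real^'n \<Rightarrow> real^'n^'n \<Rightarrow> real"
    and b :: "real^'n \<Rightarrow> 'a::metric_space \<Rightarrow> real^'n"
    and c :: "real^'n \<Rightarrow> 'a \<Rightarrow> real"
    and u :: "real^'n \<Rightarrow> real"
    and lam Lam :: real
  assumes F_cont: "continuous_on (UNIV \<times> UNIV \<times> UNIV \<times> {X. symmetric_mat X})
                      (\<lambda>(x, t, p, X). F x t p X)"
    and lam_pos: "0 < lam" and lam_le: "lam \<le> Lam"
    and ellip: "\<And>x t p X Q. symmetric_mat X \<Longrightarrow> psd_mat Q \<Longrightarrow>
                   lam * trace Q \<le> F x t p X - F x t p (X + Q) \<and>
                   F x t p X - F x t p (X + Q) \<le> Lam * trace Q"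
    and b_cont: "continuous_on UNIV (\<lambda>(x, \<alpha>). b x \<alpha>)"
    and c_cont: "continuous_on UNIV (\<lambda>(x, \<alpha>). c x \<alpha>)"
    and bc_bound: "\<And>R. R > 0 \<Longrightarrow> \<exists>K.
                     (\<forall>x \<alpha>. norm x \<le> R \<longrightarrow> norm (b x \<alpha>) + \<bar>c x \<alpha>\<bar> \<le> K) \<and>
                     (\<forall>x y \<alpha>. norm x \<le> R \<longrightarrow> norm y \<le> R \<longrightarrow>
                        norm (b x \<alpha> - b y \<alpha>) \<le> K * norm (x - y))"
    and c_nonneg: "\<And>x \<alpha>. c x \<alpha> \<ge> 0"
    and c_unif: "\<And>R e. R > 0 \<Longrightarrow> e > 0 \<Longrightarrow> \<exists>d>0. \<forall>x y \<alpha>.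
                   norm x \<le> R \<longrightarrow> norm y \<le> R \<longrightarrow> norm (x - y) < d \<longrightarrow>
                   \<bar>c x \<alpha> - c y \<alpha>\<bar> < e"
    and lyap: "\<exists>Ro>0. \<forall>x. norm x \<ge> Ro \<longrightarrow>
                 (SUP \<alpha>. ereal (b x \<alpha> \<bullet> x - c x \<alpha> * (norm x)\<^sup>2 * ln (norm x)))
                   \<le> ereal (lam - (real CARD('n) - 1) * Lam)"
    and F_inf: "\<And>x t p. ereal (F x t p 0) \<ge> (INF \<alpha>. ereal (c x \<alpha> * t - b x \<alpha> \<bullet> p))"
    and sub: "viscosity_subsolution F u"
    and growth: "Limsup at_infinity (\<lambda>x. ereal (u x / ln (norm x))) \<le> 0"
    and alt: "(\<forall>x \<alpha>. c x \<alpha> = 0) \<or> (\<forall>x. u x \<ge> 0)"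
  shows "\<exists>k. \<forall>x. u x = k"
proof -
  have ellip': "uniformly_elliptic lam Lam F"
    unfolding uniformly_elliptic_def using ellip by blast
  from lyap obtain Ro where "\<forall>x. Ro \<le> norm x \<longrightarrow>
      (SUP \<alpha>. ereal (b x \<alpha> \<bullet> x - c x \<alpha> * (norm x)\<^sup>2 * ln (norm x))) \<le> ereal (lam - (real CARD('n) - 1) * Lam)"
    by blast
  then have lyap': "b x \<alpha> \<bullet> x - c x \<alpha> * (norm x)\<^sup>2 * ln (norm x) \<le> lam - (real CARD('n) - 1) * Lam"
    if "Ro \<le> norm x" for x \<alpha>
    using that by (intro real_le_of_SUP_ereal_le) simp
  have growth': "\<And>e. 0 < e \<Longrightarrow> eventually (\<lambda>x. u x < e * ln (norm x)) at_infinity"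
    using Limsup_log_le_0_imp_eventually_less[OF growth] .
  have b_bounded: "\<exists>K. \<forall>x \<alpha>. norm x \<le> R \<longrightarrow> norm (b x \<alpha>) \<le> K" for R
  proof -
    have "0 < max R 1"
      by simp
    then obtain K where "\<forall>x \<alpha>. norm x \<le> max R 1 \<longrightarrow> norm (b x \<alpha>) + \<bar>c x \<alpha>\<bar> \<le> K"
      using bc_bound by blast
    then show ?thesis
      by (smt (verit) abs_ge_zero)
  qed
  have cu: "0 \<le> c x \<alpha> * u x" for x \<alpha>
    using alt c_nonneg by auto
  obtain xm where "\<And>x. u x \<le> u xm"
    using subsolution_attains_max[OF ellip' lam_pos lyap' F_inf sub growth' c_nonneg alt] by blast
  then show ?thesis
    using subsolution_max_imp_constant[OF ellip' lam_pos lam_le b_bounded F_inf sub cu] by blast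
qed

end
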